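(* Let $G=(V,E,\omega)$ be a graph with $V=\{v_1,\dots,v_n\}$, and let $S=\{v_{i_1},\dots,v_{i_p}\}$ (with $i_1<\dots<i_p$) be a structural set of $G$. Then $\mathcal{R}_S(G)$ is the graph whose weighted adjacency matrix (with vertices ordered $v_{i_1},\dots,v_{i_p}$) is $r\big(M(G)-\lambda I;\{i_1,\dots,i_p\}\big)+\lambda I$.
   Context: $\mathbb{W}$ is the field of rational functions in a complex variable $\lambda$ with complex coefficients. A graph $G=(V,E,\omega)$ is a finite directed graph with vertex set $V=\{v_1,\dots,v_n\}$, edges $E$ (loops allowed, at most one edge $e_{ij}$ from $v_i$ to $v_j$), weights $\omega:E\to\mathbb{W}\setminus\{0\}$, $\omega(e_{ij})=0$ for non-edges; $M(G)_{ij}=\omega(e_{ij})$. $\bar S=V\setminus S$; $\ell(G)$ is $G$ without loops; $G|_U$ is an induced subgraph. A path is a sequence of distinct vertices $u_1,\dots,u_m$ ($m\ge2$) with edges $u_k\to u_{k+1}$; a cycle is the same with $u_1=u_m$, $u_1,\dots,u_{m-1}$ distinct; $u_2,\dots,u_{m-1}$ are interior. A nonempty $S\subseteq V$ is a structural set if $\ell(G)|_{\bar S}$ has no cycles and $\omega(e_{ii})\ne\lambda$ for $v_i\in\bar S$. For $v_i,v_j\in S$, $\mathcal{B}_{ij}(G;S)$ is the set of paths or cycles from $v_i$ to $v_j$ with no interior vertex in $S$; $\mathcal{P}_\omega(u_1,\dots,u_m)=\omega(u_1u_2)\prod_{k=2}^{m-1}\frac{\omega(u_ku_{k+1})}{\lambda-\omega(u_ku_k)}$;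 $\mathcal{R}_S(G)$ is the graph on $S$ with an edge $v_i\to v_j$ iff $\mathcal{B}_{ij}(G;S)\ne\emptyset$, of weight $\sum_{\beta\in\mathcal{B}_{ij}(G;S)}\mathcal{P}_\omega(\beta)$. Matrix reduction: for $N\in\mathbb{W}^{n\times n}$ and nonempty $\mathcal{I}\subseteq\{1,\dots,n\}$ with complement $\bar{\mathcal{I}}$, let $A$ ($D$) be the principal submatrix indexed by $\bar{\mathcal{I}}$ ($\mathcal{I}$), $B$ the submatrix with rows $\bar{\mathcal{I}}$, columns $\mathcal{I}$, $C$ the submatrix with rows $\mathcal{I}$, columns $\bar{\mathcal{I}}$ (indices in increasing order); if $A$ is invertible, $r(N;\mathcal{I})=D-CA^{-1}B$ (and $r(N;\{1,\dots,n\})=N$). *)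

theory Defs
  imports "Jordan_Normal_Form.Matrix" "Jordan_Normal_Form.DL_Submatrix"
    "HOL-Computational_Algebra.Polynomial" "HOL-Computational_Algebra.Fraction_Field"
begin

type_synonym W = "complex poly fract"

definition lam :: W where "lam = Fract [:0, 1:] 1"

text \<open>A graph on vertices 0..<n (v_(i+1) corresponds to index i) is given by its weighted
 adjacency matrix M (n x n, entries in W); an edge i->j exists iff M(i,j) is nonzero.\<close>

definition is_edge :: "W mat \<Rightarrow> nat \<Rightarrow> nat \<Rightarrow> bool" where
  "is_edge M i j \<longleftrightarrow> i < dim_row M \<and> j < dim_row M \<and> M $$ (i, j) \<noteq> 0"

definition edges_along :: "W mat \<Rightarrow> nat list \<Rightarrow> bool" where
  "edges_along M xs \<longleftrightarrow> (\<forall>k. Suc k < length xs \<longrightarrow> is_edge M (xs ! k) (xs ! Suc k))"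

definition is_path :: "W mat \<Rightarrow> nat list \<Rightarrow> bool" where
  "is_path M xs \<longleftrightarrow> length xs \<ge> 2 \<and> distinct xs \<and> edges_along M xs"

definition is_cycle :: "W mat \<Rightarrow> nat list \<Rightarrow> bool" where
  "is_cycle M xs \<longleftrightarrow> length xs \<ge> 2 \<and> hd xs = last xs \<and> distinct (butlast xs) \<and> edges_along M xs"

definition loopless :: "W mat \<Rightarrow> W mat" where
  "loopless M = mat (dim_row M) (dim_col M) (\<lambda>(i, j). if i = j then 0 else M $$ (i, j))"

text \<open>Cycles of the induced subgraph on U are the cycles of the graph all of whose vertices lie in U.\<close>
definition has_cycle_in :: "W mat \<Rightarrow> nat set \<Rightarrow> bool" where
  "has_cycle_in M U \<longleftrightarrow> (\<exists>xs. is_cycle M xs \<and> set xs \<subseteq> U)"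

definition structural_set :: "W mat \<Rightarrow> nat set \<Rightarrow> bool" where
  "structural_set M S \<longleftrightarrow> S \<noteq> {} \<and> S \<subseteq> {0..<dim_row M} \<and>
     \<not> has_cycle_in (loopless M) ({0..<dim_row M} - S) \<and>
     (\<forall>i \<in> {0..<dim_row M} - S. M $$ (i, i) \<noteq> lam)"

definition branches :: "W mat \<Rightarrow> nat set \<Rightarrow> nat \<Rightarrow> nat \<Rightarrow> nat list set" where
  "branches M S i j = {xs. (is_path M xs \<or> is_cycle M xs) \<and> hd xs = i \<and> last xs = j \<and>
     (\<forall>k. 0 < k \<and> k < length xs - 1 \<longrightarrow> xs ! k \<notin> S)}"

definition path_weight :: "W mat \<Rightarrow> nat list \<Rightarrow> W" where
  "path_weight M xs = M $$ (xs ! 0, xs ! 1) *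
     (\<Prod>k\<in>{1..<length xs - 1}. M $$ (xs ! k, xs ! Suc k) / (lam - M $$ (xs ! k, xs ! k)))"

text \<open>Weighted adjacency matrix of R_S(G), vertices ordered increasingly (pick S a is the a-th
 smallest element of S); the entry is 0 when there is no edge, i.e. when B_ij is empty.\<close>
definition isospectral_reduction :: "W mat \<Rightarrow> nat set \<Rightarrow> W mat" where
  "isospectral_reduction M S = mat (card S) (card S) (\<lambda>(a, b).
     (let i = pick S a; j = pick S b in
      if branches M S i j = {} then 0 else (\<Sum>xs\<in>branches M S i j. path_weight M xs)))"

definition mat_reduction :: "W mat \<Rightarrow> nat set \<Rightarrow> W mat" where
  "mat_reduction N I =
    (let Ic = {0..<dim_row N} - I;
         A = submatrix N Ic Ic; B = submatrix N Ic I;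
         C = submatrix N I Ic; D = submatrix N I I;
         Ainv = (SOME X. inverts_mat A X \<and> inverts_mat X A)
     in if I = {0..<dim_row N} then N else D - C * Ainv * B)"

definition reduction_defined :: "W mat \<Rightarrow> nat set \<Rightarrow> bool" where
  "reduction_defined N I \<longleftrightarrow> I = {0..<dim_row N} \<or>
     invertible_mat (submatrix N ({0..<dim_row N} - I) ({0..<dim_row N} - I))"

end

theory Submission
  imports Defs "Jordan_Normal_Form.Determinant"
begin

text \<open>Put T = V - S. Because the loopless part of G on T is acyclic and lam is not a loop weight
  there, the inverse of the T-block of lam I - M is the finite sum over simple paths w_1, ..., w_m in T
  of the product of the edge weights M(w_k, w_k+1) divided by the product of lam - M(w_k, w_k) over
  all its vertices; this is verified through the first-step recurrence for these sums. A branch from i to j in S is either the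
  edge i -> j or i followed by such a simple path followed by j, and its weight P_omega is M(i, w_1)
  times the path's weight times M(w_m, j). Hence the branch sums form M_SS + M_ST (lam I - M_TT)^-1 M_TS,
  which is the Schur complement of M - lam I with respect to T, shifted by lam I.\<close>

lemma bij_betw_pick:
  assumes "finite A"
  shows "bij_betw (pick A) {0..<card A} A"
proof -
  have inj: "inj_on (pick A) {0..<card A}"
    by (rule inj_onI) (metis atLeastLessThan_iff nat_neq_iff pick_mono_le)
  have "pick A ` {0..<card A} \<subseteq> A"
    using pick_in_set_le by auto
  moreover have "card (pick A ` {0..<card A}) = card A"
    using card_image[OF inj] by simp
  ultimately have "pick A ` {0..<card A} = A"
    using card_subset_eq[OF assms] by blast
  with inj show ?thesis
    unfolding bij_betw_def by simp
qed

lemma sum_pick: "finite A \<Longrightarrow> (\<Sum>a = 0..<card A. g (pick A a)) = (\<Sum>x\<in>A. g x)"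
  using sum.reindex_bij_betw[OF bij_betw_pick] by blast

lemma pick_eq_iff: "finite A \<Longrightarrow> a < card A \<Longrightarrow> b < card A \<Longrightarrow> pick A a = pick A b \<longleftrightarrow> a = b"
  using bij_betw_pick[of A] unfolding bij_betw_def inj_on_def by auto

lemma pick_atLeast0LessThan:
  assumes "a < n"
  shows "pick {0..<n} a = a"
proof -
  have "{x \<in> {0..<n}. x < pick {0..<n} a} = {0..<pick {0..<n} a}"
    using pick_in_set_le[of a "{0..<n}"] assms by auto
  then show ?thesis
    using card_pick_le[of a "{0..<n}"] assms by simp
qed

definition mat_on :: "nat set \<Rightarrow> nat set \<Rightarrow> (nat \<Rightarrow> nat \<Rightarrow> 'a) \<Rightarrow> 'a mat" where
  "mat_on I J f = mat (card I) (card J) (\<lambda>(a, b). f (pick I a) (pick J b))"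

lemma mat_on_carrier [simp]: "mat_on I J f \<in> carrier_mat (card I) (card J)"
  and dim_mat_on [simp]: "dim_row (mat_on I J f) = card I" "dim_col (mat_on I J f) = card J"
  by (simp_all add: mat_on_def)

lemma index_mat_on [simp]:
  "a < card I \<Longrightarrow> b < card J \<Longrightarrow> mat_on I J f $$ (a, b) = f (pick I a) (pick J b)"
  by (simp add: mat_on_def)

lemma mat_on_cong:
  assumes "\<And>i j. i \<in> I \<Longrightarrow> j \<in> J \<Longrightarrow> f i j = g i j"
  shows "mat_on I J f = mat_on I J g"
  using assms pick_in_set_le by (auto intro!: eq_matI)

lemma submatrix_eq_mat_on:
  assumes "X \<in> carrier_mat n n" "I \<subseteq> {0..<n}" "J \<subseteq> {0..<n}"
  shows "submatrix X I J = mat_on I J (\<lambda>i j. X $$ (i, j))"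
proof -
  have "{i. i < n \<and> i \<in> I} = I" "{j. j < n \<and> j \<in> J} = J"
    using assms(2,3) by auto
  with assms(1) show ?thesis
    unfolding submatrix_def mat_on_def by simp
qed

lemma mat_on_mult:
  fixes f g :: "nat \<Rightarrow> nat \<Rightarrow> 'a :: semiring_0"
  assumes "finite K"
  shows "mat_on I K f * mat_on K J g = mat_on I J (\<lambda>i j. \<Sum>k\<in>K. f i k * g k j)"
  by (rule eq_matI) (simp_all add: scalar_prod_def sum_pick[OF assms, symmetric])

lemma one_mat_eq_mat_on: "finite I \<Longrightarrow> 1\<^sub>m (card I) = mat_on I I (\<lambda>i j. if i = j then 1 else 0)"
  by (rule eq_matI) (simp_all add: pick_eq_iff)

lemma mat_right_inverse_unique:
  fixes A X :: "'a :: field mat"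
  assumes A: "A \<in> carrier_mat k k" and X: "X \<in> carrier_mat k k" and AX: "A * X = 1\<^sub>m k"
  shows "invertible_mat A" "(SOME Y. inverts_mat A Y \<and> inverts_mat Y A) = X"
proof -
  have "X * A = 1\<^sub>m k"
    by (rule mat_mult_left_right_inverse[OF A X AX])
  then have inv: "inverts_mat A X \<and> inverts_mat X A"
    unfolding inverts_mat_def using A X AX by simp
  then show "invertible_mat A"
    unfolding invertible_mat_def using A by auto
  define Y where "Y = (SOME Y. inverts_mat A Y \<and> inverts_mat Y A)"
  have "inverts_mat A Y \<and> inverts_mat Y A"
    unfolding Y_def using inv by (rule someI)
  then have AY: "A * Y = 1\<^sub>m k" and YA: "Y * A = 1\<^sub>m (dim_row Y)"
    using A unfolding inverts_mat_def by auto
  have Y: "Y \<in> carrier_mat k k"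
    using arg_cong[OF AY, of dim_col] arg_cong[OF YA, of dim_col] A by auto
  have "Y = Y * (A * X)"
    using AX Y by simp
  also have "\<dots> = (Y * A) * X"
    using A X Y by (simp add: assoc_mult_mat)
  also have "\<dots> = X"
    using YA X Y by simp
  finally show "(SOME Y. inverts_mat A Y \<and> inverts_mat Y A) = X"
    unfolding Y_def .
qed

lemma mat_reduction_eq_schur_complement:
  fixes N X :: "W mat" and n :: nat and I :: "nat set"
  defines "Ic \<equiv> {0..<n} - I"
  assumes N: "N \<in> carrier_mat n n"
    and X: "X \<in> carrier_mat (card Ic) (card Ic)" and inv: "submatrix N Ic Ic * X = 1\<^sub>m (card Ic)"
  shows "reduction_defined N I \<and>
    mat_reduction N I = submatrix N I I - submatrix N I Ic * X * submatrix N Ic I"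
proof (cases "I = {0..<n}")
  case True
  then have "Ic = {}"
    unfolding Ic_def by simp
  then have "submatrix N I I - submatrix N I Ic * X * submatrix N Ic I = N"
    using N X True
    by (intro eq_matI) (simp_all add: submatrix_eq_mat_on[OF N] pick_atLeast0LessThan scalar_prod_def)
  then show ?thesis
    using N True by (simp add: reduction_defined_def mat_reduction_def)
next
  case False
  have A: "submatrix N Ic Ic \<in> carrier_mat (card Ic) (card Ic)"
    by (simp add: submatrix_eq_mat_on[OF N] Ic_def)
  show ?thesis
    using mat_right_inverse_unique[OF A X inv] N False
    unfolding reduction_defined_def mat_reduction_def Ic_def by (simp add: Let_def)
qed

lemma successively_conjI:
  "successively P xs \<Longrightarrow> successively Q xs \<Longrightarrow> successively (\<lambda>x y. P x y \<and> Q x y) xs"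
  by (induction xs rule: induct_list012) auto

lemma successively_neq_if_distinct: "distinct xs \<Longrightarrow> successively (\<noteq>) xs"
  by (induction xs rule: induct_list012) auto

lemma edges_along_iff_successively: "edges_along M xs \<longleftrightarrow> successively (is_edge M) xs"
  by (simp add: edges_along_def successively_conv_nth)

lemma successively_is_edge:
  assumes "successively (\<lambda>x y. M $$ (x, y) \<noteq> 0) xs" "set xs \<subseteq> {0..<dim_row M}"
  shows "successively (is_edge M) xs"
  using assms(1) by (rule successively_mono) (use assms(2) in \<open>auto simp: is_edge_def\<close>)

lemma is_edge_loopless_iff:
  "dim_col M = dim_row M \<Longrightarrow> is_edge (loopless M) x y \<longleftrightarrow> is_edge M x y \<and> x \<noteq> y"
  by (auto simp: is_edge_def loopless_def split: if_splits)

lemma closed_walk_is_cycle_loopless: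
  assumes sq: "dim_col M = dim_row M" and xs: "set xs \<subseteq> {0..<dim_row M}"
    and closed: "hd xs = last xs" and len: "length xs \<ge> 3" and dist: "distinct (butlast xs)"
    and nz: "successively (\<lambda>x y. M $$ (x, y) \<noteq> 0) xs"
  shows "is_cycle (loopless M) xs"
proof -
  have "length (butlast xs) \<ge> 2"
    using len by simp
  then obtain a b cs where ys: "butlast xs = a # b # cs"
    by (cases "butlast xs" rule: remdups_adj.cases) auto
  have xs_eq: "xs = butlast xs @ [last xs]"
    using len by (intro append_butlast_last_id[symmetric]) auto
  then have "hd xs = a"
    using ys by (metis append_Cons list.sel(1))
  have "last (butlast xs) \<in> set (b # cs)"
    using ys by simp
  then have "last (butlast xs) \<noteq> last xs"
    using dist ys closed \<open>hd xs = a\<close> by auto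
  then have "successively (\<noteq>) (butlast xs @ [last xs])"
    using successively_neq_if_distinct[OF dist] by (simp only: successively_append_iff) simp
  then have "successively (\<lambda>x y. is_edge M x y \<and> x \<noteq> y) xs"
    using successively_is_edge[OF nz xs] xs_eq by (metis successively_conjI)
  then have "successively (is_edge (loopless M)) xs"
    by (simp add: is_edge_loopless_iff[OF sq])
  then show ?thesis
    using len closed dist unfolding is_cycle_def edges_along_iff_successively by simp
qed

definition step_weight :: "W mat \<Rightarrow> nat \<Rightarrow> nat \<Rightarrow> W" where
  "step_weight M a b = M $$ (a, b) / (lam - M $$ (a, a))"

fun steps_weight :: "W mat \<Rightarrow> nat list \<Rightarrow> W" where
  "steps_weight M (x # y # zs) = step_weight M x y * steps_weight M (y # zs)"
| "steps_weight M _ = 1"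

fun chain_weight :: "W mat \<Rightarrow> nat list \<Rightarrow> W" where
  "chain_weight M [x] = 1 / (lam - M $$ (x, x))"
| "chain_weight M (x # y # zs) = step_weight M x y * chain_weight M (y # zs)"
| "chain_weight M [] = 1"

lemma steps_weight_eq_prod:
  "steps_weight M xs = (\<Prod>k = 0..<length xs - 1. step_weight M (xs ! k) (xs ! Suc k))"
proof (induction M xs rule: steps_weight.induct)
  case (1 M x y zs)
  have "length (x # y # zs) - 1 = Suc (length (y # zs) - 1)"
    by simp
  with 1 show ?case
    by (simp only: prod.atLeast0_lessThan_Suc_shift) (simp add: o_def)
qed auto

lemma path_weight_Cons:
  assumes "zs \<noteq> []"
  shows "path_weight M (x # zs) = M $$ (x, hd zs) * steps_weight M zs"
proof -
  have range: "{1..<length (x # zs) - 1} = {Suc 0..<Suc (length zs - 1)}"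
    using assms by simp
  show ?thesis
    unfolding path_weight_def steps_weight_eq_prod range prod.atLeast_Suc_lessThan_Suc_shift
    using assms by (simp add: o_def step_weight_def hd_conv_nth)
qed

lemma chain_weight_snoc: "ys \<noteq> [] \<Longrightarrow> chain_weight M ys * M $$ (last ys, j) = steps_weight M (ys @ [j])"
  by (induction M ys rule: chain_weight.induct) (auto simp: step_weight_def)

lemma path_weight_Cons_snoc:
  "ys \<noteq> [] \<Longrightarrow> path_weight M (i # ys @ [j]) = M $$ (i, hd ys) * chain_weight M ys * M $$ (last ys, j)"
  by (simp add: path_weight_Cons chain_weight_snoc mult.assoc)

lemma successively_if_chain_weight_nonzero:
  "chain_weight M ys \<noteq> 0 \<Longrightarrow> successively (\<lambda>x y. M $$ (x, y) \<noteq> 0) ys"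
  by (induction M ys rule: chain_weight.induct) (auto simp: step_weight_def)

definition simple_chains :: "nat set \<Rightarrow> nat list set" where
  "simple_chains T = {ys. set ys \<subseteq> T \<and> distinct ys \<and> ys \<noteq> []}"

lemma finite_simple_chains:
  assumes "finite T"
  shows "finite (simple_chains T)"
proof -
  have "simple_chains T \<subseteq> {xs. set xs \<subseteq> T \<and> length xs \<le> card T}"
  proof
    fix xs assume "xs \<in> simple_chains T"
    then have "set xs \<subseteq> T" "distinct xs"
      by (simp_all add: simple_chains_def)
    then show "xs \<in> {xs. set xs \<subseteq> T \<and> length xs \<le> card T}"
      using distinct_card[of xs] card_mono[OF assms \<open>set xs \<subseteq> T\<close>] by simp
  qed
  then show ?thesis
    using finite_lists_length_le[OF assms] finite_subset by blast
qed

text \<open>If the loopless part of M on T is acyclic, the Neumann series of the inverse of lam I - M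
  restricted to T terminates and its (u, v) entry collapses to this sum over simple paths from u to v.\<close>
definition chain_sum :: "W mat \<Rightarrow> nat set \<Rightarrow> nat \<Rightarrow> nat \<Rightarrow> W" where
  "chain_sum M T u v = (\<Sum>ys | ys \<in> simple_chains T \<and> hd ys = u \<and> last ys = v. chain_weight M ys)"

lemma sum_simple_chains_by_ends:
  assumes "finite T"
  shows "(\<Sum>ys\<in>simple_chains T. f (hd ys) (last ys) * chain_weight M ys)
    = (\<Sum>u\<in>T. \<Sum>v\<in>T. f u v * chain_sum M T u v)"
proof -
  have "(\<Sum>ys\<in>simple_chains T. f (hd ys) (last ys) * chain_weight M ys)
      = (\<Sum>p\<in>T \<times> T. \<Sum>ys | ys \<in> simple_chains T \<and> (hd ys, last ys) = p. f (hd ys) (last ys) * chain_weight M ys)"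
    by (rule sum.group[symmetric, OF finite_simple_chains[OF assms]]) (auto simp: assms simple_chains_def)
  also have "\<dots> = (\<Sum>(u, v)\<in>T \<times> T. f u v * chain_sum M T u v)"
  proof (rule sum.cong[OF refl])
    fix p :: "nat \<times> nat"
    obtain u v where p: "p = (u, v)"
      by (cases p)
    have "(\<Sum>ys | ys \<in> simple_chains T \<and> (hd ys, last ys) = p. f (hd ys) (last ys) * chain_weight M ys)
        = (\<Sum>ys | ys \<in> simple_chains T \<and> hd ys = u \<and> last ys = v. f u v * chain_weight M ys)"
      unfolding p by (rule sum.cong) auto
    then show "(\<Sum>ys | ys \<in> simple_chains T \<and> (hd ys, last ys) = p. f (hd ys) (last ys) * chain_weight M ys)
        = (case p of (u, v) \<Rightarrow> f u v * chain_sum M T u v)"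
      unfolding p chain_sum_def by (simp add: sum_distrib_left)
  qed
  finally show ?thesis
    by (simp add: sum.cartesian_product)
qed

lemma chain_weight_eq_0_if_closes_cycle:
  assumes acyclic: "\<not> has_cycle_in (loopless M) T"
    and sq: "dim_col M = dim_row M" and T: "T \<subseteq> {0..<dim_row M}"
    and u: "u \<in> T" and zs: "zs \<in> simple_chains T" and "u \<in> set zs" "hd zs \<noteq> u"
  shows "M $$ (u, hd zs) * chain_weight M zs = 0"
proof (rule ccontr)
  assume nz: "M $$ (u, hd zs) * chain_weight M zs \<noteq> 0"
  obtain as bs where zs_eq: "zs = as @ u # bs"
    using split_list[OF \<open>u \<in> set zs\<close>] by blast
  with \<open>hd zs \<noteq> u\<close> have "as \<noteq> []"
    by auto
  define xs where "xs = u # as @ [u]"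
  have "successively (\<lambda>x y. M $$ (x, y) \<noteq> 0) ((as @ [u]) @ bs)"
    using successively_if_chain_weight_nonzero[of M zs] nz zs_eq by simp
  then have "successively (\<lambda>x y. M $$ (x, y) \<noteq> 0) (as @ [u])"
    by (simp only: successively_append_iff)
  moreover have "M $$ (u, hd (as @ [u])) \<noteq> 0"
    using nz zs_eq \<open>as \<noteq> []\<close> by simp
  ultimately have "successively (\<lambda>x y. M $$ (x, y) \<noteq> 0) xs"
    unfolding xs_def by (simp only: successively_Cons) simp
  moreover have "set xs \<subseteq> T" "distinct (butlast xs)"
    using zs u zs_eq unfolding xs_def simple_chains_def by (auto simp: butlast_append)
  ultimately have "is_cycle (loopless M) xs"
    using T \<open>as \<noteq> []\<close> by (intro closed_walk_is_cycle_loopless[OF sq]) (auto simp: xs_def Suc_le_eq)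
  with \<open>set xs \<subseteq> T\<close> acyclic show False
    unfolding has_cycle_in_def by blast
qed

lemma simple_chains_from_to:
  assumes "u \<in> T"
  shows "{ys \<in> simple_chains T. hd ys = u \<and> last ys = v}
    = (if u = v then {[u]} else {}) \<union> Cons u ` {zs \<in> simple_chains T. last zs = v \<and> u \<notin> set zs}"
    (is "?L = ?R")
proof (rule equalityI; rule subsetI)
  fix ys assume ys: "ys \<in> ?L"
  then have "ys \<noteq> []" "hd ys = u"
    by (simp_all add: simple_chains_def)
  then obtain zs where ys_eq: "ys = u # zs"
    by (metis list.collapse)
  show "ys \<in> ?R"
  proof (cases "zs = []")
    case True
    then show ?thesis
      using ys ys_eq by simp
  next
    case False
    then have "zs \<in> {zs \<in> simple_chains T. last zs = v \<and> u \<notin> set zs}"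
      using ys ys_eq by (auto simp: simple_chains_def)
    then show ?thesis
      using ys_eq by blast
  qed
next
  fix ys assume "ys \<in> ?R"
  then show "ys \<in> ?L"
    using assms by (auto simp: simple_chains_def split: if_splits)
qed

lemma chain_sum_unfold:
  assumes T: "finite T" and u: "u \<in> T" and diag: "M $$ (u, u) \<noteq> lam"
  shows "(lam - M $$ (u, u)) * chain_sum M T u v = (if u = v then 1 else 0)
    + (\<Sum>zs | zs \<in> simple_chains T \<and> last zs = v \<and> u \<notin> set zs. M $$ (u, hd zs) * chain_weight M zs)"
proof -
  let ?Z = "{zs \<in> simple_chains T. last zs = v \<and> u \<notin> set zs}"
  have fin: "finite ?Z"
    using finite_simple_chains[OF T] by simp
  have "[u] \<notin> Cons u ` ?Z"
    by (auto simp: simple_chains_def)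
  then have "chain_sum M T u v
      = (\<Sum>ys\<in>(if u = v then {[u]} else {}). chain_weight M ys) + (\<Sum>ys\<in>Cons u ` ?Z. chain_weight M ys)"
    unfolding chain_sum_def simple_chains_from_to[OF u] using fin by (intro sum.union_disjoint) auto
  also have "\<dots> = (if u = v then chain_weight M [u] else 0) + (\<Sum>zs\<in>?Z. chain_weight M (u # zs))"
    by (simp add: sum.reindex)
  finally have "chain_sum M T u v = (if u = v then chain_weight M [u] else 0) + (\<Sum>zs\<in>?Z. chain_weight M (u # zs))" .
  moreover have "(lam - M $$ (u, u)) * chain_weight M (u # zs) = M $$ (u, hd zs) * chain_weight M zs"
    if "zs \<in> ?Z" for zs
  proof -
    have "zs \<noteq> []"
      using that by (simp add: simple_chains_def)
    then obtain z zs' where "zs = z # zs'"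
      by (cases zs) auto
    then show ?thesis
      using diag by (simp add: step_weight_def)
  qed
  ultimately show ?thesis
    using diag by (cases "u = v") (simp_all add: distrib_left sum_distrib_left)
qed

lemma chain_sum_recurrence:
  assumes acyclic: "\<not> has_cycle_in (loopless M) T"
    and sq: "dim_col M = dim_row M" and T: "T \<subseteq> {0..<dim_row M}"
    and u: "u \<in> T" and v: "v \<in> T" and diag: "M $$ (u, u) \<noteq> lam"
  shows "(lam - M $$ (u, u)) * chain_sum M T u v
    = (if u = v then 1 else 0) + (\<Sum>w\<in>T - {u}. M $$ (u, w) * chain_sum M T w v)"
proof -
  have fin: "finite T"
    using T finite_subset by blast
  define g where "g w v' = (if v' = v \<and> w \<noteq> u then M $$ (u, w) else 0)" for w v'
  have "(\<Sum>zs | zs \<in> simple_chains T \<and> last zs = v \<and> u \<notin> set zs. M $$ (u, hd zs) * chain_weight M zs)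
      = (\<Sum>zs\<in>simple_chains T. g (hd zs) (last zs) * chain_weight M zs)"
  proof (rule sum.mono_neutral_cong_left)
    \<comment> \<open>a chain that leaves u and passes through u again closes a cycle, so its weight vanishes\<close>
    show "\<forall>zs \<in> simple_chains T - {zs \<in> simple_chains T. last zs = v \<and> u \<notin> set zs}.
        g (hd zs) (last zs) * chain_weight M zs = 0"
      using chain_weight_eq_0_if_closes_cycle[OF acyclic sq T u] by (auto simp: g_def)
    show "M $$ (u, hd zs) * chain_weight M zs = g (hd zs) (last zs) * chain_weight M zs"
      if "zs \<in> {zs \<in> simple_chains T. last zs = v \<and> u \<notin> set zs}" for zs
      using that hd_in_set[of zs] by (auto simp: g_def simple_chains_def)
  qed (auto simp: finite_simple_chains fin)
  also have "\<dots> = (\<Sum>w\<in>T. \<Sum>v'\<in>T. g w v' * chain_sum M T w v')"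
    by (rule sum_simple_chains_by_ends[OF fin])
  also have "\<dots> = (\<Sum>w\<in>T. if w \<noteq> u then M $$ (u, w) * chain_sum M T w v else 0)"
  proof (rule sum.cong[OF refl])
    fix w
    have "(\<Sum>v'\<in>T. g w v' * chain_sum M T w v')
        = (\<Sum>v'\<in>T. if v' = v then (if w \<noteq> u then M $$ (u, w) * chain_sum M T w v else 0) else 0)"
      by (rule sum.cong) (auto simp: g_def)
    then show "(\<Sum>v'\<in>T. g w v' * chain_sum M T w v') = (if w \<noteq> u then M $$ (u, w) * chain_sum M T w v else 0)"
      using v fin by simp
  qed
  also have "\<dots> = (\<Sum>w\<in>T - {u}. M $$ (u, w) * chain_sum M T w v)"
    using fin by (simp add: sum.inter_filter[symmetric] set_diff_eq)
  finally show ?thesis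
    using chain_sum_unfold[OF fin u diag] by simp
qed

lemma chain_sum_right_inverse:
  assumes M: "M \<in> carrier_mat n n" and T: "T \<subseteq> {0..<n}"
    and acyclic: "\<not> has_cycle_in (loopless M) T" and diag: "\<forall>u\<in>T. M $$ (u, u) \<noteq> lam"
  shows "submatrix (M - lam \<cdot>\<^sub>m 1\<^sub>m n) T T * mat_on T T (\<lambda>u v. - chain_sum M T u v) = 1\<^sub>m (card T)"
proof -
  have fin: "finite T"
    using T finite_subset by blast
  have sub: "submatrix (M - lam \<cdot>\<^sub>m 1\<^sub>m n) T T
      = mat_on T T (\<lambda>u w. M $$ (u, w) - (if u = w then lam else 0))"
  proof -
    have "submatrix (M - lam \<cdot>\<^sub>m 1\<^sub>m n) T T = mat_on T T (\<lambda>u w. (M - lam \<cdot>\<^sub>m 1\<^sub>m n) $$ (u, w))"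
      by (rule submatrix_eq_mat_on) (use M T in auto)
    also have "\<dots> = mat_on T T (\<lambda>u w. M $$ (u, w) - (if u = w then lam else 0))"
      by (rule mat_on_cong) (use M T in \<open>auto simp: subset_iff\<close>)
    finally show ?thesis .
  qed
  have entry: "(\<Sum>w\<in>T. (M $$ (u, w) - (if u = w then lam else 0)) * - chain_sum M T w v)
      = (if u = v then 1 else 0)"
    if "u \<in> T" "v \<in> T" for u v
  proof -
    have "(\<Sum>w\<in>T. (M $$ (u, w) - (if u = w then lam else 0)) * - chain_sum M T w v)
        = (\<Sum>w\<in>T. (if u = w then lam * chain_sum M T w v else 0) - M $$ (u, w) * chain_sum M T w v)"
      by (rule sum.cong) (auto simp: algebra_simps)
    also have "\<dots> = (lam - M $$ (u, u)) * chain_sum M T u v - (\<Sum>w\<in>T - {u}. M $$ (u, w) * chain_sum M T w v)"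
      using fin that by (simp add: sum_subtractf sum.remove algebra_simps)
    also have "\<dots> = (if u = v then 1 else 0)"
      using chain_sum_recurrence[OF acyclic _ _ that] diag M T that by simp
    finally show ?thesis .
  qed
  show ?thesis
    unfolding sub mat_on_mult[OF fin] one_mat_eq_mat_on[OF fin] by (rule mat_on_cong) (rule entry)
qed

lemma set_subset_if_successively_is_edge:
  "successively (is_edge M) xs \<Longrightarrow> length xs \<ge> 2 \<Longrightarrow> set xs \<subseteq> {0..<dim_row M}"
proof (induction xs rule: induct_list012)
  case (3 x y zs)
  then show ?case
    by (cases zs) (auto simp: is_edge_def)
qed auto

lemma branchesD:
  assumes "xs \<in> branches M S i j"
  shows "length xs \<ge> 2" "hd xs = i" "last xs = j" "set xs \<subseteq> {0..<dim_row M}"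
    "distinct (butlast xs)" "successively (is_edge M) xs"
    "\<And>k. 0 < k \<Longrightarrow> k < length xs - 1 \<Longrightarrow> xs ! k \<notin> S"
proof -
  from assms have "is_path M xs \<or> is_cycle M xs"
    unfolding branches_def by simp
  then show "length xs \<ge> 2" "successively (is_edge M) xs" "distinct (butlast xs)"
    unfolding is_path_def is_cycle_def edges_along_iff_successively by (auto simp: distinct_butlast)
  then show "set xs \<subseteq> {0..<dim_row M}"
    using set_subset_if_successively_is_edge by blast
  show "hd xs = i" "last xs = j" "\<And>k. 0 < k \<Longrightarrow> k < length xs - 1 \<Longrightarrow> xs ! k \<notin> S"
    using assms unfolding branches_def by auto
qed

lemma finite_branches: "finite (branches M S i j)"
proof -
  have "branches M S i j \<subseteq> {xs. set xs \<subseteq> {0..<dim_row M} \<and> length xs \<le> Suc (dim_row M)}"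
  proof
    fix xs assume xs: "xs \<in> branches M S i j"
    have "set (butlast xs) \<subseteq> {0..<dim_row M}"
      using branchesD(4)[OF xs] by (meson in_set_butlastD subset_iff)
    then have "length (butlast xs) \<le> dim_row M"
      using distinct_card[OF branchesD(5)[OF xs]] card_mono[of "{0..<dim_row M}" "set (butlast xs)"] by simp
    then show "xs \<in> {xs. set xs \<subseteq> {0..<dim_row M} \<and> length xs \<le> Suc (dim_row M)}"
      using branchesD(4)[OF xs] by simp
  qed
  then show ?thesis
    using finite_lists_length_le[of "{0..<dim_row M}"] finite_subset by blast
qed

lemma short_branches:
  assumes "i < dim_row M" "j < dim_row M"
  shows "{xs \<in> branches M S i j. length xs = 2} = (if M $$ (i, j) = 0 then {} else {[i, j]})"
proof -
  have "xs \<in> branches M S i j \<and> length xs = 2 \<longleftrightarrow> M $$ (i, j) \<noteq> 0 \<and> xs = [i, j]" for xs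
  proof
    assume xs: "xs \<in> branches M S i j \<and> length xs = 2"
    then obtain a b where "xs = [a, b]"
      by (auto simp: length_Suc_conv numeral_2_eq_2)
    then show "M $$ (i, j) \<noteq> 0 \<and> xs = [i, j]"
      using branchesD(2,3,6)[OF conjunct1[OF xs]] by (auto simp: is_edge_def)
  next
    assume "M $$ (i, j) \<noteq> 0 \<and> xs = [i, j]"
    moreover then have "edges_along M [i, j]"
      using assms by (simp add: edges_along_iff_successively is_edge_def)
    ultimately show "xs \<in> branches M S i j \<and> length xs = 2"
      unfolding branches_def is_path_def is_cycle_def by auto
  qed
  then show ?thesis
    by auto
qed

lemma long_branch_eq_Cons_snoc:
  assumes xs: "xs \<in> branches M S i j" and len: "length xs \<noteq> 2"
  shows "\<exists>ys \<in> simple_chains ({0..<dim_row M} - S). xs = i # ys @ [j]"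
proof
  define ys where "ys = butlast (tl xs)"
  have len3: "length xs \<ge> 3"
    using branchesD(1)[OF xs] len by simp
  then have "xs \<noteq> []" "tl xs \<noteq> []"
    by (simp_all flip: length_greater_0_conv)
  then have "xs = hd xs # ys @ [last xs]"
    unfolding ys_def by (metis append_butlast_last_id last_tl list.collapse)
  then show xs_eq: "xs = i # ys @ [j]"
    using branchesD(2,3)[OF xs] by simp
  have "length xs = length ys + 2"
    by (subst xs_eq) simp
  moreover have "butlast xs = i # ys"
    by (subst xs_eq) (simp add: butlast_append)
  ultimately have "ys \<noteq> []" "distinct ys"
    using len3 branchesD(5)[OF xs] by auto
  moreover have "y \<in> {0..<dim_row M} - S" if "y \<in> set ys" for y
  proof -
    obtain k where k: "k < length ys" "ys ! k = y"
      using \<open>y \<in> set ys\<close> by (meson in_set_conv_nth)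
    then have "xs ! Suc k = y"
      by (subst xs_eq) (simp add: nth_append)
    moreover have "xs ! Suc k \<notin> S"
      using branchesD(7)[OF xs, of "Suc k"] k xs_eq by simp
    moreover have "xs ! Suc k \<in> set xs"
      using k xs_eq nth_mem[of k ys] by (simp add: nth_append)
    ultimately show ?thesis
      using branchesD(4)[OF xs] by auto
  qed
  ultimately show "ys \<in> simple_chains ({0..<dim_row M} - S)"
    unfolding simple_chains_def by auto
qed

lemma Cons_snoc_in_branches:
  assumes S: "S \<subseteq> {0..<dim_row M}" "i \<in> S" "j \<in> S"
    and ys: "ys \<in> simple_chains ({0..<dim_row M} - S)"
    and nz: "M $$ (i, hd ys) * chain_weight M ys * M $$ (last ys, j) \<noteq> 0"
  shows "i # ys @ [j] \<in> branches M S i j"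
proof -
  let ?xs = "i # ys @ [j]"
  have ys_facts: "set ys \<subseteq> {0..<dim_row M} - S" "distinct ys" "ys \<noteq> []"
    using ys unfolding simple_chains_def by auto
  have "successively (\<lambda>x y. M $$ (x, y) \<noteq> 0) ys"
    using successively_if_chain_weight_nonzero[of M ys] nz by simp
  then have "successively (\<lambda>x y. M $$ (x, y) \<noteq> 0) (ys @ [j])"
    using nz by (simp only: successively_append_iff) simp
  then have "successively (\<lambda>x y. M $$ (x, y) \<noteq> 0) ?xs"
    using nz ys_facts(3) by (simp only: successively_Cons) simp
  moreover have "set ?xs \<subseteq> {0..<dim_row M}"
    using S ys_facts(1) by auto
  ultimately have edges: "edges_along M ?xs"
    unfolding edges_along_iff_successively by (rule successively_is_edge)
  have "is_path M ?xs \<or> is_cycle M ?xs"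
  proof (cases "i = j")
    case True
    then show ?thesis
      using edges ys_facts S unfolding is_cycle_def by (auto simp: butlast_append)
  next
    case False
    then show ?thesis
      using edges ys_facts S unfolding is_path_def by auto
  qed
  moreover have "?xs ! k \<notin> S" if "0 < k" "k < length ?xs - 1" for k
  proof -
    obtain k' where "k = Suc k'"
      using \<open>0 < k\<close> gr0_conv_Suc by blast
    with that have k': "k = Suc k'" "k' < length ys"
      by simp_all
    then have "?xs ! k \<in> set ys"
      by (simp add: nth_append)
    then show ?thesis
      using ys_facts(1) by auto
  qed
  ultimately show ?thesis
    unfolding branches_def by simp
qed

lemma branch_sum_eq:
  assumes S: "S \<subseteq> {0..<dim_row M}" "i \<in> S" "j \<in> S"
  shows "(\<Sum>xs\<in>branches M S i j. path_weight M xs) = M $$ (i, j)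
    + (\<Sum>ys\<in>simple_chains ({0..<dim_row M} - S). M $$ (i, hd ys) * chain_weight M ys * M $$ (last ys, j))"
proof -
  let ?T = "{0..<dim_row M} - S" and ?B = "branches M S i j"
  let ?F = "\<lambda>ys. M $$ (i, hd ys) * chain_weight M ys * M $$ (last ys, j)"
  let ?Y = "{ys \<in> simple_chains ?T. i # ys @ [j] \<in> ?B}"
  have "?B = {xs \<in> ?B. length xs = 2} \<union> {xs \<in> ?B. length xs \<noteq> 2}"
    by auto
  then have "(\<Sum>xs\<in>?B. path_weight M xs)
      = (\<Sum>xs\<in>{xs \<in> ?B. length xs = 2}. path_weight M xs) + (\<Sum>xs\<in>{xs \<in> ?B. length xs \<noteq> 2}. path_weight M xs)"
    using finite_branches[of M S i j]
    by (metis (no_types, lifting) sum.union_disjoint disjoint_iff finite_Un mem_Collect_eq)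
  also have "(\<Sum>xs\<in>{xs \<in> ?B. length xs = 2}. path_weight M xs) = M $$ (i, j)"
    using S by (simp add: short_branches subset_iff path_weight_def)
  also have "{xs \<in> ?B. length xs \<noteq> 2} = (\<lambda>ys. i # ys @ [j]) ` ?Y"
    using long_branch_eq_Cons_snoc[of _ M S i j] by (fastforce simp: simple_chains_def)
  also have "(\<Sum>xs\<in>(\<lambda>ys. i # ys @ [j]) ` ?Y. path_weight M xs) = (\<Sum>ys\<in>?Y. ?F ys)"
    by (subst sum.reindex) (auto simp: inj_on_def simple_chains_def path_weight_Cons_snoc)
  also have "\<dots> = (\<Sum>ys\<in>simple_chains ?T. ?F ys)"
    using Cons_snoc_in_branches[OF S] by (intro sum.mono_neutral_left) (auto simp: finite_simple_chains)
  finally show ?thesis .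
qed

lemma isospectral_reduction_eq_mat_on:
  "isospectral_reduction M S = mat_on S S (\<lambda>i j. \<Sum>xs\<in>branches M S i j. path_weight M xs)"
  by (rule eq_matI) (simp_all add: isospectral_reduction_def Let_def)

lemma isospectral_reduction_eq_schur_complement:
  fixes M :: "W mat" and n :: nat and S :: "nat set"
  defines "T \<equiv> {0..<n} - S" and "N \<equiv> M - lam \<cdot>\<^sub>m 1\<^sub>m n"
  assumes M: "M \<in> carrier_mat n n" and S: "S \<subseteq> {0..<n}"
  shows "isospectral_reduction M S = submatrix N S S
    - submatrix N S T * mat_on T T (\<lambda>u v. - chain_sum M T u v) * submatrix N T S + lam \<cdot>\<^sub>m 1\<^sub>m (card S)"
proof -
  have fin: "finite S" "finite T"
    using S finite_subset unfolding T_def by auto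
  have N: "N \<in> carrier_mat n n"
    unfolding N_def by (simp add: minus_carrier_mat)
  have N_entry: "N $$ (i, j) = M $$ (i, j) - (if i = j then lam else 0)" if "i < n" "j < n" for i j
    using M that unfolding N_def by simp
  have D: "submatrix N S S = mat_on S S (\<lambda>i j. M $$ (i, j) - (if i = j then lam else 0))"
    using S by (auto simp: submatrix_eq_mat_on[OF N] N_entry subset_iff intro!: mat_on_cong)
  have C: "submatrix N S T = mat_on S T (\<lambda>i u. M $$ (i, u))"
    using S by (auto simp: submatrix_eq_mat_on[OF N] N_entry T_def subset_iff intro!: mat_on_cong)
  have B: "submatrix N T S = mat_on T S (\<lambda>v j. M $$ (v, j))"
    using S by (auto simp: submatrix_eq_mat_on[OF N] N_entry T_def subset_iff intro!: mat_on_cong)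
  have "isospectral_reduction M S
      = mat_on S S (\<lambda>i j. M $$ (i, j) + (\<Sum>u\<in>T. \<Sum>v\<in>T. M $$ (i, u) * chain_sum M T u v * M $$ (v, j)))"
    unfolding isospectral_reduction_eq_mat_on
  proof (rule mat_on_cong)
    fix i j assume "i \<in> S" "j \<in> S"
    then show "(\<Sum>xs\<in>branches M S i j. path_weight M xs)
        = M $$ (i, j) + (\<Sum>u\<in>T. \<Sum>v\<in>T. M $$ (i, u) * chain_sum M T u v * M $$ (v, j))"
      using branch_sum_eq[of S M i j] sum_simple_chains_by_ends[OF fin(2), of "\<lambda>u v. M $$ (i, u) * M $$ (v, j)" M]
        M S unfolding T_def by (simp add: mult_ac)
  qed
  also have "\<dots> = mat_on S S (\<lambda>i j. (M $$ (i, j) - (if i = j then lam else 0))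
      - (\<Sum>v\<in>T. (\<Sum>u\<in>T. M $$ (i, u) * - chain_sum M T u v) * M $$ (v, j)) + (if i = j then lam else 0))"
  proof (rule mat_on_cong)
    fix i j
    have "(\<Sum>v\<in>T. (\<Sum>u\<in>T. M $$ (i, u) * - chain_sum M T u v) * M $$ (v, j))
        = (\<Sum>v\<in>T. \<Sum>u\<in>T. - (M $$ (i, u) * chain_sum M T u v * M $$ (v, j)))"
      by (simp add: sum_distrib_right)
    also have "\<dots> = - (\<Sum>u\<in>T. \<Sum>v\<in>T. M $$ (i, u) * chain_sum M T u v * M $$ (v, j))"
      by (subst sum.swap) (simp add: sum_negf)
    finally show "M $$ (i, j) + (\<Sum>u\<in>T. \<Sum>v\<in>T. M $$ (i, u) * chain_sum M T u v * M $$ (v, j))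
        = (M $$ (i, j) - (if i = j then lam else 0))
          - (\<Sum>v\<in>T. (\<Sum>u\<in>T. M $$ (i, u) * - chain_sum M T u v) * M $$ (v, j)) + (if i = j then lam else 0)"
      by simp
  qed
  also have "\<dots> = submatrix N S S
      - submatrix N S T * mat_on T T (\<lambda>u v. - chain_sum M T u v) * submatrix N T S + lam \<cdot>\<^sub>m 1\<^sub>m (card S)"
    unfolding D C B mat_on_mult[OF fin(2)] by (rule eq_matI) (simp_all add: pick_eq_iff[OF fin(1)])
  finally show ?thesis .
qed

theorem lemma3:
  fixes M :: "W mat" and n :: nat and S :: "nat set"
  assumes "M \<in> carrier_mat n n"
    and "structural_set M S"
  shows "reduction_defined (M - lam \<cdot>\<^sub>m 1\<^sub>m n) S \<and>
         isospectral_reduction M S = mat_reduction (M - lam \<cdot>\<^sub>m 1\<^sub>m n) S + lam \<cdot>\<^sub>m 1\<^sub>m (card S)"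
proof -
  define N where "N = M - lam \<cdot>\<^sub>m 1\<^sub>m n"
  define T where "T = {0..<n} - S"
  define X where "X = mat_on T T (\<lambda>u v. - chain_sum M T u v)"
  have S: "S \<subseteq> {0..<n}" and acyclic: "\<not> has_cycle_in (loopless M) T"
    and diag: "\<forall>u\<in>T. M $$ (u, u) \<noteq> lam"
    using assms unfolding structural_set_def T_def by auto
  have N: "N \<in> carrier_mat n n"
    unfolding N_def by (simp add: minus_carrier_mat)
  have "submatrix N T T * X = 1\<^sub>m (card T)"
    unfolding N_def X_def using chain_sum_right_inverse[OF assms(1) _ acyclic diag] T_def by simp
  then have "reduction_defined N S \<and> mat_reduction N S = submatrix N S S - submatrix N S T * X * submatrix N T S"
    using mat_reduction_eq_schur_complement[OF N, of X S] unfolding X_def T_def by simp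
  moreover have "isospectral_reduction M S
      = submatrix N S S - submatrix N S T * X * submatrix N T S + lam \<cdot>\<^sub>m 1\<^sub>m (card S)"
    unfolding N_def X_def T_def by (rule isospectral_reduction_eq_schur_complement[OF assms(1) S])
  ultimately show ?thesis
    unfolding N_def by simp
qed

end
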